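(* Let $\gamma:\mathbb{R}\to\mathbb{R}^3$ be a $C^\infty$ $l$-periodic curve parametrized by arc length, $\xi$ a $C^\infty$ $l$-odd-periodic unit vector field along $\gamma$ with $\gamma'(s),\xi(s)$ linearly independent for all $s$ and $\det(\gamma',\xi,\xi')\equiv 0$, and let $F(s,u)=\gamma(s)+u\xi(s)$, $(s,u)\in\mathbb{R}^2$, regarded on $M=\mathbb{R}^2/\!\sim$. Let $\nu(s)=\gamma'(s)\times\xi(s)/|\gamma'(s)\times\xi(s)|$. Then: (i) every singular point of $F$ is non-degenerate, i.e. $d\lambda\neq 0$ there, where $\lambda=\det(F_s,F_u,\nu)$; (ii) the singular set of $F$ is $$S(F)=\left\{(s,u)\in M : u=-\frac{|\gamma'(s)\times\xi(s)|^2}{\gamma'(s)\cdot\xi'(s)},\ \xi'(s)\neq 0\right\};$$ (iii) along the singular set, a null vector field of $F$ (a nonzero vector field $\eta$ with $dF(\eta)=0$) is given by $\dfrac{\partial}{\partial s}-(\gamma'\cdot\xi)\dfrac{\partial}{\partial u}$.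
   Context: $l$-periodic means $\gamma(s+l)=\gamma(s)$; $l$-odd-periodic means $\xi(s+l)=-\xi(s)$; $\sim$ identifies $(s,u)$ with $(s+l,-u)$. A singular point is a point where the Jacobian of $F$ has rank $<2$. The condition $\det(\gamma',\xi,\xi')\equiv 0$ means $F$ is developable (flat). *)

theory Defs
  imports "HOL-Analysis.Analysis"
begin

definition C_inf :: "(real \<Rightarrow> real^3) \<Rightarrow> bool" where
  "C_inf f \<longleftrightarrow> (\<exists>D :: nat \<Rightarrow> real \<Rightarrow> real^3. D 0 = f \<and>
      (\<forall>n t. (D n has_vector_derivative D (Suc n) t) (at t)))"

definition det3 :: "real^3 \<Rightarrow> real^3 \<Rightarrow> real^3 \<Rightarrow> real" where
  "det3 a b c = det (vector [a, b, c] :: real^3^3)"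

definition ruled :: "(real \<Rightarrow> real^3) \<Rightarrow> (real \<Rightarrow> real^3) \<Rightarrow> real \<times> real \<Rightarrow> real^3" where
  "ruled \<gamma> \<xi> = (\<lambda>(s, u). \<gamma> s + u *\<^sub>R \<xi> s)"

definition partial_s :: "(real \<times> real \<Rightarrow> real^3) \<Rightarrow> real \<times> real \<Rightarrow> real^3" where
  "partial_s F p = vector_derivative (\<lambda>t. F (t, snd p)) (at (fst p))"

definition partial_u :: "(real \<times> real \<Rightarrow> real^3) \<Rightarrow> real \<times> real \<Rightarrow> real^3" where
  "partial_u F p = vector_derivative (\<lambda>t. F (fst p, t)) (at (snd p))"

definition singular_point :: "(real \<times> real \<Rightarrow> real^3) \<Rightarrow> real \<times> real \<Rightarrow> bool" where
  "singular_point F p \<longleftrightarrow> (\<exists>F'. (F has_derivative F') (at p) \<and> dim (range F') < 2)"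

end

theory Submission
  imports Defs
begin

(* Flatness together with |\<xi>| = 1 forces \<xi>' = a (\<gamma>' - (\<gamma>' \<bullet> \<xi>) \<xi>) for the scalar
   a = (\<gamma>' \<bullet> \<xi>') / |\<gamma>' \<times> \<xi>|^2.  Hence dF(s,u) maps (1,0) to (1 + u a) \<gamma>' modulo \<xi>,
   so (s,u) is singular exactly when 1 + u a = 0, and then (1, - \<gamma>' \<bullet> \<xi>) is a null vector.
   As F_s is affine in u, \<lambda>_u = \<xi>' \<bullet> (\<xi> \<times> \<nu>) = a |\<gamma>' \<times> \<xi>|, which is nonzero on the
   singular set.  Everything is local in s: periodicity only matters for the quotient M. *)

lemma dim_range_pair_lt_2_iff:
  fixes v w :: "'a::euclidean_space"
  assumes "w \<noteq> 0"
  shows "dim (range (\<lambda>h::real \<times> real. fst h *\<^sub>R v + snd h *\<^sub>R w)) < 2 \<longleftrightarrow> (\<exists>t. v = t *\<^sub>R w)"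
proof -
  have "range (\<lambda>h::real \<times> real. fst h *\<^sub>R v + snd h *\<^sub>R w) = span {v, w}"
    by (auto simp: span_insert span_singleton image_iff algebra_simps) (metis add_diff_cancel)+
  then show ?thesis
    using assms by (auto simp: dim_insert span_singleton)
qed

lemma unit_field_orthogonal_derivative:
  fixes \<xi> :: "real \<Rightarrow> 'a::real_inner"
  assumes "\<And>t. norm (\<xi> t) = 1" and "(\<xi> has_vector_derivative \<xi>') (at s)"
  shows "\<xi> s \<bullet> \<xi>' = 0"
proof -
  have "((\<lambda>t. \<xi> t \<bullet> \<xi> t) has_derivative (\<lambda>h. \<xi> s \<bullet> (h *\<^sub>R \<xi>') + (h *\<^sub>R \<xi>') \<bullet> \<xi> s)) (at s)"
    using assms(2) unfolding has_vector_derivative_def by (intro has_derivative_inner)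
  moreover have "(\<lambda>t. \<xi> t \<bullet> \<xi> t) = (\<lambda>_. 1)"
    using assms(1) by (simp add: dot_square_norm)
  ultimately have "(\<lambda>h. \<xi> s \<bullet> (h *\<^sub>R \<xi>') + (h *\<^sub>R \<xi>') \<bullet> \<xi> s) = (\<lambda>_. 0)"
    using has_derivative_unique has_derivative_const by metis
  then show ?thesis
    by (metis (mono_tags) inner_commute mult_2 mult_eq_0_iff scaleR_one zero_neq_numeral)
qed

lemma C_inf_differentiable:
  assumes "C_inf f" shows "f differentiable (at t)"
  using assms unfolding C_inf_def differentiable_def has_vector_derivative_def by blast

lemma C_inf_vector_derivative:
  assumes "C_inf f" shows "C_inf (\<lambda>t. vector_derivative f (at t))"
proof -
  obtain D where D0: "D 0 = f" and D: "\<And>n t. (D n has_vector_derivative D (Suc n) t) (at t)"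
    using assms unfolding C_inf_def by blast
  have "(\<lambda>t. vector_derivative f (at t)) = D 1"
    using D[of 0] D0 by (auto intro: vector_derivative_at)
  then show ?thesis
    unfolding C_inf_def using D by (intro exI[of _ "\<lambda>n. D (Suc n)"]) auto
qed

lemma det3_eq_inner_cross3: "det3 a b c = a \<bullet> cross3 b c"
  by (simp add: det3_def dot_cross_det)

lemma differentiable_cross3 [derivative_intros]:
  fixes f g :: "'a::real_normed_vector \<Rightarrow> real^3"
  assumes "f differentiable (at z within S)" and "g differentiable (at z within S)"
  shows "(\<lambda>x. cross3 (f x) (g x)) differentiable (at z within S)"
proof -
  have "bounded_bilinear cross3"
    using bilinear_conv_bounded_bilinear bilinear_cross by blast
  then show ?thesis
    using assms unfolding differentiable_def by (blast dest: bounded_bilinear.FDERIV)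
qed

lemma orthogonal_cross3_in_span:
  fixes g x v :: "real^3"
  assumes "cross3 g x \<noteq> 0" and "v \<bullet> cross3 g x = 0"
  obtains a b where "v = a *\<^sub>R g + b *\<^sub>R x"
proof
  let ?n = "cross3 g x"
  \<comment> \<open>expansion of v in the basis g, x, g \<times> x\<close>
  have "(?n \<bullet> ?n) *\<^sub>R v = (cross3 v x \<bullet> ?n) *\<^sub>R g + (cross3 g v \<bullet> ?n) *\<^sub>R x + (v \<bullet> ?n) *\<^sub>R ?n"
    by (simp add: vec_eq_iff forall_3 cross3_def inner_vec_def sum_3 algebra_simps)
  then have "(?n \<bullet> ?n) *\<^sub>R v = (?n \<bullet> ?n) *\<^sub>R
      (((cross3 v x \<bullet> ?n) / (?n \<bullet> ?n)) *\<^sub>R g + ((cross3 g v \<bullet> ?n) / (?n \<bullet> ?n)) *\<^sub>R x)"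
    using assms by (simp add: scaleR_add_right)
  then show "v = ((cross3 v x \<bullet> ?n) / (?n \<bullet> ?n)) *\<^sub>R g + ((cross3 g v \<bullet> ?n) / (?n \<bullet> ?n)) *\<^sub>R x"
    using assms(1) by simp
qed

lemma coplanar_unit_derivative_eq:
  fixes g x x' :: "real^3"
  assumes "cross3 g x \<noteq> 0" and "norm g = 1" and "norm x = 1"
    and "x \<bullet> x' = 0" and "det3 g x x' = 0"
  shows "x' = ((g \<bullet> x') / (norm (cross3 g x))\<^sup>2) *\<^sub>R (g - (g \<bullet> x) *\<^sub>R x)"
proof -
  have "x' \<bullet> cross3 g x = 0"
    using assms(5) by (simp add: det3_eq_inner_cross3 cross3_simps)
  then obtain a b where x': "x' = a *\<^sub>R g + b *\<^sub>R x"
    using orthogonal_cross3_in_span assms(1) by blast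
  have gg: "g \<bullet> g = 1" and xx: "x \<bullet> x = 1"
    using assms(2,3) by (simp_all add: dot_square_norm)
  have "b = - a * (g \<bullet> x)"
    using assms(4) xx by (simp add: x' inner_add_right inner_commute)
  then have x'_eq: "x' = a *\<^sub>R (g - (g \<bullet> x) *\<^sub>R x)"
    by (simp add: x' algebra_simps)
  have "(norm (cross3 g x))\<^sup>2 = 1 - (g \<bullet> x)\<^sup>2"
    using norm_cross_dot[of g x] assms(2,3) by simp
  then have "g \<bullet> x' = a * (norm (cross3 g x))\<^sup>2"
    using gg by (simp add: x'_eq inner_diff_right inner_commute power2_eq_square)
  then have "(g \<bullet> x') / (norm (cross3 g x))\<^sup>2 = a"
    using assms(1) by simp
  then show ?thesis
    using x'_eq by simp
qed

lemma has_derivative_ruled: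
  assumes "(\<gamma> has_vector_derivative g) (at s)" and "(\<xi> has_vector_derivative x') (at s)"
  shows "(ruled \<gamma> \<xi> has_derivative (\<lambda>h. fst h *\<^sub>R (g + u *\<^sub>R x') + snd h *\<^sub>R \<xi> s)) (at (s, u))"
proof -
  have fst: "((\<lambda>q. f (fst q)) has_derivative (\<lambda>h. fst h *\<^sub>R f')) (at (s, u))"
    if "(f has_vector_derivative f') (at s)" for f :: "real \<Rightarrow> real^3" and f'
    using has_derivative_compose[OF has_derivative_fst[OF has_derivative_ident]] that
    by (fastforce simp: has_vector_derivative_def)
  have "ruled \<gamma> \<xi> = (\<lambda>q. \<gamma> (fst q) + snd q *\<^sub>R \<xi> (fst q))"
    by (auto simp: ruled_def)
  moreover have "((\<lambda>q. \<gamma> (fst q) + snd q *\<^sub>R \<xi> (fst q)) has_derivative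
      (\<lambda>h. fst h *\<^sub>R g + (u *\<^sub>R (fst h *\<^sub>R x') + snd h *\<^sub>R \<xi> s))) (at (s, u))"
    using has_derivative_scaleR[OF has_derivative_snd[OF has_derivative_ident] fst[OF assms(2)]]
    by (auto intro!: has_derivative_add fst assms(1))
  ultimately show ?thesis
    by (auto elim!: has_derivative_eq_rhs simp: algebra_simps)
qed

lemma partial_s_ruled:
  assumes "(\<gamma> has_vector_derivative g) (at s)" and "(\<xi> has_vector_derivative x') (at s)"
  shows "partial_s (ruled \<gamma> \<xi>) (s, u) = g + u *\<^sub>R x'"
  unfolding partial_s_def ruled_def
  by (auto intro!: vector_derivative_at derivative_eq_intros assms)

lemma partial_u_ruled: "partial_u (ruled \<gamma> \<xi>) (s, u) = \<xi> s"
  unfolding partial_u_def ruled_def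
  by (auto intro!: vector_derivative_at derivative_eq_intros)

lemma has_derivative_nonzero_if_partial_nonzero:
  fixes f :: "real \<times> real \<Rightarrow> real"
  assumes "(f has_derivative L) (at (s, u))"
    and "((\<lambda>t. f (s, t)) has_real_derivative k) (at u)" and "k \<noteq> 0"
  shows "L \<noteq> (\<lambda>_. 0)"
proof
  assume "L = (\<lambda>_. 0)"
  have "((\<lambda>t. (s, t)) has_derivative (\<lambda>h. (0, h))) (at u)"
    by (auto intro!: derivative_eq_intros)
  then have "((\<lambda>t. f (s, t)) has_derivative (\<lambda>h. L (0, h))) (at u)"
    using has_derivative_compose assms(1) by fastforce
  with \<open>L = (\<lambda>_. 0)\<close> assms(2) have "(\<lambda>h::real. 0) = (\<lambda>h. h * k)"
    by (metis has_derivative_unique has_field_derivative_def mult.commute)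
  then show False
    using assms(3) by (metis mult_1)
qed

locale developable_ruled =
  fixes \<gamma> \<xi> \<gamma>' \<xi>' :: "real \<Rightarrow> real^3"
  assumes \<gamma>_derivative: "\<And>t. (\<gamma> has_vector_derivative \<gamma>' t) (at t)"
    and \<xi>_derivative: "\<And>t. (\<xi> has_vector_derivative \<xi>' t) (at t)"
    and \<gamma>'_differentiable: "\<And>t. \<gamma>' differentiable (at t)"
    and \<xi>'_differentiable: "\<And>t. \<xi>' differentiable (at t)"
    and unit_speed: "\<And>t. norm (\<gamma>' t) = 1"
    and unit_field: "\<And>t. norm (\<xi> t) = 1"
    and independent: "\<And>t a b. a *\<^sub>R \<gamma>' t + b *\<^sub>R \<xi> t = 0 \<Longrightarrow> a = 0 \<and> b = 0"
    and flat: "\<And>t. det3 (\<gamma>' t) (\<xi> t) (\<xi>' t) = 0"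
begin

definition normal :: "real \<Rightarrow> real^3" where
  "normal t = (1 / norm (cross3 (\<gamma>' t) (\<xi> t))) *\<^sub>R cross3 (\<gamma>' t) (\<xi> t)"

definition rate :: "real \<Rightarrow> real" where
  "rate t = (\<gamma>' t \<bullet> \<xi>' t) / (norm (cross3 (\<gamma>' t) (\<xi> t)))\<^sup>2"

definition area_density :: "real \<times> real \<Rightarrow> real" where
  "area_density q = det3 (partial_s (ruled \<gamma> \<xi>) q) (partial_u (ruled \<gamma> \<xi>) q) (normal (fst q))"

lemma cross3_nonzero: "cross3 (\<gamma>' t) (\<xi> t) \<noteq> 0"
proof
  assume "cross3 (\<gamma>' t) (\<xi> t) = 0"
  moreover have "cross3 (\<gamma>' t) (cross3 (\<gamma>' t) (\<xi> t))
      = (\<gamma>' t \<bullet> \<xi> t) *\<^sub>R \<gamma>' t + (- (\<gamma>' t \<bullet> \<gamma>' t)) *\<^sub>R \<xi> t"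
    by (simp add: vec_eq_iff forall_3 cross3_def inner_vec_def sum_3 algebra_simps)
  ultimately have "(\<gamma>' t \<bullet> \<xi> t) *\<^sub>R \<gamma>' t + (- 1) *\<^sub>R \<xi> t = 0"
    using unit_speed[of t] by (simp add: dot_square_norm)
  then show False
    using independent by fastforce
qed

lemma \<xi>'_eq: "\<xi>' t = rate t *\<^sub>R (\<gamma>' t - (\<gamma>' t \<bullet> \<xi> t) *\<^sub>R \<xi> t)"
  unfolding rate_def
  by (intro coplanar_unit_derivative_eq cross3_nonzero unit_speed unit_field flat
      unit_field_orthogonal_derivative[OF unit_field \<xi>_derivative])

lemma has_derivative_ruled_at:
  "(ruled \<gamma> \<xi> has_derivative (\<lambda>h. fst h *\<^sub>R (\<gamma>' s + u *\<^sub>R \<xi>' s) + snd h *\<^sub>R \<xi> s)) (at (s, u))"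
  by (rule has_derivative_ruled[OF \<gamma>_derivative \<xi>_derivative])

lemma singular_point_iff: "singular_point (ruled \<gamma> \<xi>) (s, u) \<longleftrightarrow> 1 + u * rate s = 0"
proof -
  let ?D = "\<lambda>h. fst h *\<^sub>R (\<gamma>' s + u *\<^sub>R \<xi>' s) + snd h *\<^sub>R \<xi> s"
  have "singular_point (ruled \<gamma> \<xi>) (s, u) \<longleftrightarrow> dim (range ?D) < 2"
    unfolding singular_point_def using has_derivative_ruled_at has_derivative_unique by blast
  also have "\<dots> \<longleftrightarrow> (\<exists>t. \<gamma>' s + u *\<^sub>R \<xi>' s = t *\<^sub>R \<xi> s)"
    by (rule dim_range_pair_lt_2_iff) (use unit_field[of s] in auto)
  also have "\<dots> \<longleftrightarrow> 1 + u * rate s = 0"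
  proof
    assume "\<exists>t. \<gamma>' s + u *\<^sub>R \<xi>' s = t *\<^sub>R \<xi> s"
    then obtain t where "(1 + u * rate s) *\<^sub>R \<gamma>' s + (- u * rate s * (\<gamma>' s \<bullet> \<xi> s) - t) *\<^sub>R \<xi> s = 0"
      by (subst (asm) \<xi>'_eq) (auto simp: algebra_simps)
    then show "1 + u * rate s = 0"
      using independent by fastforce
  next
    assume "1 + u * rate s = 0"
    moreover have "\<gamma>' s + u *\<^sub>R \<xi>' s
        = (1 + u * rate s) *\<^sub>R \<gamma>' s + (- u * rate s * (\<gamma>' s \<bullet> \<xi> s)) *\<^sub>R \<xi> s"
      by (subst \<xi>'_eq) (simp add: algebra_simps)
    ultimately have "\<gamma>' s + u *\<^sub>R \<xi>' s = (- u * rate s * (\<gamma>' s \<bullet> \<xi> s)) *\<^sub>R \<xi> s"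
      by simp
    then show "\<exists>t. \<gamma>' s + u *\<^sub>R \<xi>' s = t *\<^sub>R \<xi> s" ..
  qed
  finally show ?thesis .
qed

lemma singular_set:
  "singular_point (ruled \<gamma> \<xi>) (s, u) \<longleftrightarrow>
     u = - (norm (cross3 (\<gamma>' s) (\<xi> s)))\<^sup>2 / (\<gamma>' s \<bullet> \<xi>' s) \<and> \<xi>' s \<noteq> 0"
proof -
  have "\<gamma>' s - (\<gamma>' s \<bullet> \<xi> s) *\<^sub>R \<xi> s \<noteq> 0"
    using independent[where t=s and a=1 and b="- (\<gamma>' s \<bullet> \<xi> s)"] by auto
  then have "\<xi>' s \<noteq> 0 \<longleftrightarrow> rate s \<noteq> 0"
    by (subst \<xi>'_eq) simp
  moreover have "(norm (cross3 (\<gamma>' s) (\<xi> s)))\<^sup>2 / (\<gamma>' s \<bullet> \<xi>' s) = 1 / rate s"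
    using cross3_nonzero[of s] by (simp add: rate_def)
  ultimately show ?thesis
    unfolding singular_point_iff by (auto simp: field_simps)
qed

lemma null_vector:
  assumes "singular_point (ruled \<gamma> \<xi>) (s, u)"
  shows "\<exists>F'. (ruled \<gamma> \<xi> has_derivative F') (at (s, u)) \<and> F' (1, - (\<gamma>' s \<bullet> \<xi> s)) = 0"
proof (intro exI conjI)
  have "\<gamma>' s + u *\<^sub>R \<xi>' s - (\<gamma>' s \<bullet> \<xi> s) *\<^sub>R \<xi> s
      = (1 + u * rate s) *\<^sub>R (\<gamma>' s - (\<gamma>' s \<bullet> \<xi> s) *\<^sub>R \<xi> s)"
    by (subst \<xi>'_eq) (simp add: algebra_simps)
  then show "(\<lambda>h. fst h *\<^sub>R (\<gamma>' s + u *\<^sub>R \<xi>' s) + snd h *\<^sub>R \<xi> s) (1, - (\<gamma>' s \<bullet> \<xi> s)) = 0"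
    using assms by (simp add: singular_point_iff)
qed (rule has_derivative_ruled_at)

lemma normal_differentiable: "normal differentiable (at t)"
proof -
  have "(\<lambda>t. cross3 (\<gamma>' t) (\<xi> t)) differentiable (at t)"
    using \<gamma>'_differentiable \<xi>_derivative
    by (intro differentiable_cross3) (auto intro: differentiableI_vector)
  then show ?thesis
    unfolding normal_def using cross3_nonzero[of t]
    by (auto intro!: derivative_intros differentiable_compose[of norm])
qed

lemma area_density_eq:
  "area_density (s, u) = \<gamma>' s \<bullet> cross3 (\<xi> s) (normal s) + u * (\<xi>' s \<bullet> cross3 (\<xi> s) (normal s))"
  unfolding area_density_def
  by (simp add: partial_s_ruled[OF \<gamma>_derivative \<xi>_derivative] partial_u_ruled
      det3_eq_inner_cross3 inner_add_left)

lemma area_density_partial_u: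
  "\<xi>' s \<bullet> cross3 (\<xi> s) (normal s) = rate s * norm (cross3 (\<gamma>' s) (\<xi> s))"
proof -
  let ?n = "cross3 (\<gamma>' s) (\<xi> s)"
  have "cross3 (\<xi>' s) (\<xi> s) = rate s *\<^sub>R ?n"
    by (subst \<xi>'_eq) (simp add: cross_mult_left Cross3.left_diff_distrib)
  moreover have "\<xi>' s \<bullet> cross3 (\<xi> s) (normal s) = cross3 (\<xi>' s) (\<xi> s) \<bullet> normal s"
    by (simp add: cross3_simps)
  moreover have "?n \<bullet> normal s = norm ?n"
    unfolding normal_def by (simp add: dot_square_norm power2_eq_square)
  ultimately show ?thesis
    by simp
qed

lemma area_density_differentiable: "area_density differentiable (at p)"
proof -
  have fst_compose: "(\<lambda>q. f (fst q)) differentiable (at p)"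
    if "f differentiable (at (fst p))" for f :: "real \<Rightarrow> 'b::real_normed_vector"
    using differentiable_compose[OF that bounded_linear_imp_differentiable[OF bounded_linear_fst]] .
  have H: "(\<lambda>t. cross3 (\<xi> t) (normal t)) differentiable (at t)" for t
    using \<xi>_derivative normal_differentiable
    by (intro differentiable_cross3) (auto intro: differentiableI_vector)
  have "(\<lambda>q. \<gamma>' (fst q) \<bullet> cross3 (\<xi> (fst q)) (normal (fst q))
      + snd q * (\<xi>' (fst q) \<bullet> cross3 (\<xi> (fst q)) (normal (fst q)))) differentiable (at p)"
    using \<gamma>'_differentiable \<xi>'_differentiable H
    by (intro differentiable_add differentiable_mult fst_compose differentiable_inner
        bounded_linear_imp_differentiable[OF bounded_linear_snd])
  moreover have "area_density = (\<lambda>q. \<gamma>' (fst q) \<bullet> cross3 (\<xi> (fst q)) (normal (fst q))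
      + snd q * (\<xi>' (fst q) \<bullet> cross3 (\<xi> (fst q)) (normal (fst q))))"
    by (auto simp: fun_eq_iff area_density_eq)
  ultimately show ?thesis by simp
qed

lemma nondegenerate:
  assumes "singular_point (ruled \<gamma> \<xi>) p"
  shows "\<exists>L. (area_density has_derivative L) (at p) \<and> L \<noteq> (\<lambda>_. 0)"
proof -
  obtain s u where p: "p = (s, u)" by fastforce
  obtain L where L: "(area_density has_derivative L) (at p)"
    using area_density_differentiable unfolding differentiable_def by blast
  have "rate s \<noteq> 0"
    using assms p singular_point_iff by fastforce
  then have "rate s * norm (cross3 (\<gamma>' s) (\<xi> s)) \<noteq> 0"
    using cross3_nonzero by simp
  moreover have "((\<lambda>t. area_density (s, t)) has_real_derivative
      rate s * norm (cross3 (\<gamma>' s) (\<xi> s))) (at u)"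
    unfolding area_density_eq area_density_partial_u by (auto intro!: derivative_eq_intros)
  ultimately have "L \<noteq> (\<lambda>_. 0)"
    using has_derivative_nonzero_if_partial_nonzero L p by blast
  with L show ?thesis by blast
qed

end

theorem lemma2p6:
  fixes \<gamma> \<xi> :: "real \<Rightarrow> real^3" and l :: real
  defines "\<gamma>' \<equiv> (\<lambda>s. vector_derivative \<gamma> (at s))"
      and "\<xi>' \<equiv> (\<lambda>s. vector_derivative \<xi> (at s))"
      and "F \<equiv> ruled \<gamma> \<xi>"
      and "\<nu> \<equiv> (\<lambda>s. (1 / norm (cross3 (vector_derivative \<gamma> (at s)) (\<xi> s))) *\<^sub>R
                      cross3 (vector_derivative \<gamma> (at s)) (\<xi> s))"
  assumes l_pos: "l > 0"
      and smooth_\<gamma>: "C_inf \<gamma>" and smooth_\<xi>: "C_inf \<xi>"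
      and periodic: "\<forall>s. \<gamma> (s + l) = \<gamma> s"
      and odd_periodic: "\<forall>s. \<xi> (s + l) = - \<xi> s"
      and arclength: "\<forall>s. norm (\<gamma>' s) = 1"
      and unit: "\<forall>s. norm (\<xi> s) = 1"
      and lin_indep: "\<forall>s a b. a *\<^sub>R \<gamma>' s + b *\<^sub>R \<xi> s = 0 \<longrightarrow> a = 0 \<and> b = 0"
      and flat: "\<forall>s. det3 (\<gamma>' s) (\<xi> s) (\<xi>' s) = 0"
  shows "(\<forall>p. singular_point F p \<longrightarrow>
            (\<exists>L. ((\<lambda>q. det3 (partial_s F q) (partial_u F q) (\<nu> (fst q))) has_derivative L) (at p)
                 \<and> L \<noteq> (\<lambda>_. 0)))
       \<and> (\<forall>s u. singular_point F (s, u) \<longleftrightarrow>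
            (u = - (norm (cross3 (\<gamma>' s) (\<xi> s)))\<^sup>2 / (\<gamma>' s \<bullet> \<xi>' s) \<and> \<xi>' s \<noteq> 0))
       \<and> (\<forall>s u. singular_point F (s, u) \<longrightarrow>
            (1, - (\<gamma>' s \<bullet> \<xi> s)) \<noteq> (0 :: real \<times> real) \<and>
            (\<exists>F'. (F has_derivative F') (at (s, u)) \<and> F' (1, - (\<gamma>' s \<bullet> \<xi> s)) = 0))"
proof -
  have C_inf_derivatives: "(f has_vector_derivative vector_derivative f (at t)) (at t)"
      "(\<lambda>t. vector_derivative f (at t)) differentiable (at t)" if "C_inf f" for f t
    using C_inf_differentiable[OF that] C_inf_differentiable[OF C_inf_vector_derivative[OF that]]
    by (auto intro: vector_derivative_works[THEN iffD1])
  interpret developable_ruled \<gamma> \<xi> \<gamma>' \<xi>'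
    using C_inf_derivatives smooth_\<gamma> smooth_\<xi> arclength unit lin_indep flat
    unfolding \<gamma>'_def \<xi>'_def by unfold_locales auto
  have "\<nu> t = normal t" for t
    unfolding normal_def unfolding \<nu>_def \<gamma>'_def ..
  then have area_density_eq_det3: "(\<lambda>q. det3 (partial_s F q) (partial_u F q) (\<nu> (fst q))) = area_density"
    unfolding F_def area_density_def by simp
  show ?thesis
    unfolding area_density_eq_det3 unfolding F_def
    using nondegenerate singular_set null_vector by (simp add: zero_prod_def)
qed

end
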